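(* Let $X$ be a topological space and let $A\subseteq X$ be an open subset whose closure $\overline{A}$ in $X$ is path connected. Let $p:X\to X/A$ be the quotient map and $*=p(A)$. Then for every $a\in A$, the image of the induced continuous homomorphism $p_*:\pi_1^{top}(X,a)\to \pi_1^{top}(X/A,* )$ is dense, i.e. $\overline{p_*\pi_1^{top}(X,a)}=\pi_1^{top}(X/A,* )$.
   Context: For $A\subseteq X$, $X/A$ denotes the quotient space obtained from $X$ by identifying all points of $A$ to a single point $*$, with quotient map $p$. For a pointed space $(X,x)$, $\Omega(X,x)$ is the space of loops $[0,1]\to X$ based at $x$ with the compact-open topology, and the topological fundamental group $\pi_1^{top}(X,x)$ is the fundamental group $\pi_1(X,x)$ equipped with the quotient topology with respect to the canonical surjection $\Omega(X,x)\to\pi_1(X,x)$ sending a loop to its homotopy class (rel endpoints). A based continuous map $f$ induces a continuous homomorphism $f_*$ of topological fundamental groups. *)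

theory Defs
  imports "HOL-Analysis.Analysis"
begin

definition quotient_topology :: "'a topology \<Rightarrow> ('a \<Rightarrow> 'b) \<Rightarrow> 'b topology" where
  "quotient_topology T f =
     topology (\<lambda>U. U \<subseteq> f ` topspace T \<and> openin T {y \<in> topspace T. f y \<in> U})"

lemma istopology_quotient:
  "istopology (\<lambda>U. U \<subseteq> f ` topspace T \<and> openin T {y \<in> topspace T. f y \<in> U})"
proof -
  have i: "{y \<in> topspace T. f y \<in> S \<inter> U} = {y \<in> topspace T. f y \<in> S} \<inter> {y \<in> topspace T. f y \<in> U}" for S U
    by auto
  have u: "{y \<in> topspace T. f y \<in> \<Union>K} = (\<Union>U\<in>K. {y \<in> topspace T. f y \<in> U})" for K
    by auto
  show ?thesis unfolding istopology_def
  proof (rule conjI; intro allI impI ballI)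
    fix S U assume "S \<subseteq> f ` topspace T \<and> openin T {y \<in> topspace T. f y \<in> S}"
      "U \<subseteq> f ` topspace T \<and> openin T {y \<in> topspace T. f y \<in> U}"
    then show "S \<inter> U \<subseteq> f ` topspace T \<and> openin T {y \<in> topspace T. f y \<in> S \<inter> U}"
      unfolding i using openin_Int by blast
  next
    fix K assume "\<forall>U\<in>K. U \<subseteq> f ` topspace T \<and> openin T {y \<in> topspace T. f y \<in> U}"
    then show "\<Union>K \<subseteq> f ` topspace T \<and> openin T {y \<in> topspace T. f y \<in> \<Union>K}"
      unfolding u by (intro conjI openin_Union) auto
  qed
qed

lemma openin_quotient_topology:
  "openin (quotient_topology T f) U \<longleftrightarrow> U \<subseteq> f ` topspace T \<and> openin T {y \<in> topspace T. f y \<in> U}"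
  unfolding quotient_topology_def by (simp add: topology_inverse'[OF istopology_quotient])

definition collapse :: "'a set \<Rightarrow> 'a \<Rightarrow> 'a set" where
  "collapse A x = (if x \<in> A then A else {x})"

definition quotient_space :: "'a topology \<Rightarrow> 'a set \<Rightarrow> 'a set topology" where
  "quotient_space X A = quotient_topology X (collapse A)"

definition loops :: "'a topology \<Rightarrow> 'a \<Rightarrow> (real \<Rightarrow> 'a) set" where
  "loops X x = {g. pathin X g \<and> g 0 = x \<and> g 1 = x}"

definition loop_space :: "'a topology \<Rightarrow> 'a \<Rightarrow> (real \<Rightarrow> 'a) topology" where
  "loop_space X x = topology_generated_by
     {{g \<in> loops X x. g ` K \<subseteq> U} | K U. compactin (top_of_set {0..1::real}) K \<and> openin X U}"

text \<open>Homotopy of based loops relative to the endpoints (only values on [0,1] matter).\<close>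
definition loop_homotopic :: "'a topology \<Rightarrow> 'a \<Rightarrow> (real \<Rightarrow> 'a) \<Rightarrow> (real \<Rightarrow> 'a) \<Rightarrow> bool" where
  "loop_homotopic X x g g' \<longleftrightarrow>
     (\<exists>h. continuous_map (prod_topology (top_of_set {0..1::real}) (top_of_set {0..1::real})) X h \<and>
          (\<forall>s\<in>{0..1}. h (0, s) = g s \<and> h (1, s) = g' s) \<and>
          (\<forall>t\<in>{0..1}. h (t, 0) = x \<and> h (t, 1) = x))"

definition loop_class :: "'a topology \<Rightarrow> 'a \<Rightarrow> (real \<Rightarrow> 'a) \<Rightarrow> (real \<Rightarrow> 'a) set" where
  "loop_class X x g = {g' \<in> loops X x. loop_homotopic X x g g'}"

text \<open>Topological fundamental group (underlying topological space; elements are homotopy classes).\<close>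
definition pi1_top :: "'a topology \<Rightarrow> 'a \<Rightarrow> (real \<Rightarrow> 'a) set topology" where
  "pi1_top X x = quotient_topology (loop_space X x) (loop_class X x)"

definition induced_pi1 :: "'a topology \<Rightarrow> 'a \<Rightarrow> 'b topology \<Rightarrow> ('a \<Rightarrow> 'b)
                          \<Rightarrow> (real \<Rightarrow> 'a) set \<Rightarrow> (real \<Rightarrow> 'b) set" where
  "induced_pi1 X x Y f c = loop_class Y (f x) (f \<circ> (SOME g. g \<in> c))"

end

theory Submission
  imports Defs
begin

(* By the definition of the quotient topology on pi_1, it suffices that every loop beta at
   the base point can be moved, inside any basic compact-open neighbourhood
   {g. g ` K_i <= U_i for all i}, to a loop homotopic to p o alpha for some loop alpha at a.
   Let E = p(closure A).  Two facts about X/A drive the construction: the base point is an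
   open point (A is open), and every open set meeting E contains the base point (points of E
   are limits of A).  Conditions whose U_i contains the base point are harmless; the times in
   the remaining K_i lie outside the closed set beta^-1(E), so they are covered by finitely
   many gaps of beta^-1(E), on whose closures beta avoids the base point.  Keeping beta on
   these intervals and sending all other times to the base point gives a continuous loop
   beta' in the neighbourhood; lifting beta on the intervals and joining the lifts through
   the path connected closure of A gives alpha.  Finally p o alpha and beta' agree up to
   specialisation: wherever beta'(t) is the base point, p(alpha(t)) lies in E.  This makes
   them homotopic. *)

section \<open>Quotient topologies and gluing of paths\<close>

lemma topspace_quotient_topology: "topspace (quotient_topology T f) = f ` topspace T"
proof -
  have "{y \<in> topspace T. f y \<in> f ` topspace T} = topspace T" by auto
  then have "openin (quotient_topology T f) (f ` topspace T)"
    unfolding openin_quotient_topology by auto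
  moreover have "topspace (quotient_topology T f) \<subseteq> f ` topspace T"
    using openin_topspace[of "quotient_topology T f"] unfolding openin_quotient_topology by blast
  ultimately show ?thesis by (simp add: openin_subset subset_antisym)
qed

lemma continuous_map_quotient: "continuous_map T (quotient_topology T f) f"
  unfolding continuous_map_def topspace_quotient_topology openin_quotient_topology
  by auto

lemma prod_top_of_set: "prod_topology (top_of_set S) (top_of_set T) = top_of_set (S \<times> T)"
  by (metis prod_topology_euclidean subtopology_Times)

lemma continuous_map_reparam:
  assumes "continuous_on D \<phi>" "\<phi> ` D \<subseteq> D'" "continuous_map (top_of_set D') X h"
  shows "continuous_map (top_of_set D) X (\<lambda>x. h (\<phi> x))"
proof -
  have "continuous_map (top_of_set D) (top_of_set D') \<phi>"
    using assms(1,2) by (auto simp: continuous_map_in_subtopology)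
  from continuous_map_compose[OF this assms(3)] show ?thesis by (simp add: o_def)
qed

lemma continuous_map_join_intervals:
  fixes u v w :: real
  assumes uv: "u \<le> v" and vw: "v \<le> w"
    and f: "continuous_map (top_of_set {u..v}) X f"
    and g: "continuous_map (top_of_set {v..w}) X g"
    and fg: "f v = g v"
  shows "continuous_map (top_of_set {u..w}) X (\<lambda>t. if t \<le> v then f t else g t)"
proof -
  have f': "continuous_map (top_of_set {u..w}) X (\<lambda>t. f (max u (min v t)))"
    by (rule continuous_map_reparam[OF _ _ f]) (use uv in \<open>auto intro!: continuous_intros\<close>)
  have g': "continuous_map (top_of_set {u..w}) X (\<lambda>t. g (min w (max v t)))"
    by (rule continuous_map_reparam[OF _ _ g]) (use vw in \<open>auto intro!: continuous_intros\<close>)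
  have "continuous_map (top_of_set {u..w}) X
          (\<lambda>t. if t \<le> v then f (max u (min v t)) else g (min w (max v t)))"
    by (rule continuous_map_cases_le)
       (use fg vw in \<open>auto intro: continuous_map_from_subtopology[OF f'] continuous_map_from_subtopology[OF g']\<close>)
  then show ?thesis
    by (rule continuous_map_eq) auto
qed

section \<open>Basic neighbourhoods in the loop space\<close>

text \<open>A finite family of compact-open conditions \<open>g ` K \<subseteq> U\<close> (\<open>K \<subseteq> [0,1]\<close> compact, \<open>U\<close> open);
  the sets of loops obeying such a family form a base of the loop space.\<close>
definition compact_open_constraints :: "'a topology \<Rightarrow> (real set \<times> 'a set) set \<Rightarrow> bool" where
  "compact_open_constraints X P \<longleftrightarrow> finite P \<and>
     (\<forall>z\<in>P. compactin (top_of_set {0..1::real}) (fst z) \<and> openin X (snd z))"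

definition obeys :: "(real set \<times> 'a set) set \<Rightarrow> (real \<Rightarrow> 'a) \<Rightarrow> bool" where
  "obeys P g \<longleftrightarrow> (\<forall>z\<in>P. g ` fst z \<subseteq> snd z)"

lemma topspace_loop_space: "topspace (loop_space X x) = loops X x"
proof -
  have "loops X x \<in> {{g \<in> loops X x. g ` K \<subseteq> U} | K U.
                      compactin (top_of_set {0..1::real}) K \<and> openin X U}"
    by (rule CollectI, rule exI[of _ "{}"], rule exI[of _ "topspace X"]) auto
  then show ?thesis unfolding loop_space_def topology_generated_by_topspace by blast
qed

lemma loop_space_nbhd:
  assumes "openin (loop_space X x) V" and "\<beta> \<in> V"
  obtains P where "compact_open_constraints X P" "obeys P \<beta>"
    "\<And>g. g \<in> loops X x \<Longrightarrow> obeys P g \<Longrightarrow> g \<in> V"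
proof -
  have "generate_topology_on {{g \<in> loops X x. g ` K \<subseteq> U} | K U.
          compactin (top_of_set {0..1::real}) K \<and> openin X U} V"
    using assms(1) unfolding loop_space_def openin_topology_generated_by_iff .
  then have "\<exists>P. compact_open_constraints X P \<and> obeys P \<beta> \<and> (\<forall>g\<in>loops X x. obeys P g \<longrightarrow> g \<in> V)"
    using assms(2)
  proof (induction arbitrary: \<beta> rule: generate_topology_on.induct)
    case Empty
    then show ?case by simp
  next
    case (Int V1 V2)
    obtain P1 where P1:
      "compact_open_constraints X P1" "obeys P1 \<beta>" "\<forall>g\<in>loops X x. obeys P1 g \<longrightarrow> g \<in> V1"
      using Int.IH(1)[of \<beta>] Int.prems by blast
    obtain P2 where P2:
      "compact_open_constraints X P2" "obeys P2 \<beta>" "\<forall>g\<in>loops X x. obeys P2 g \<longrightarrow> g \<in> V2"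
      using Int.IH(2)[of \<beta>] Int.prems by blast
    have "compact_open_constraints X (P1 \<union> P2) \<and> obeys (P1 \<union> P2) \<beta> \<and>
          (\<forall>g\<in>loops X x. obeys (P1 \<union> P2) g \<longrightarrow> g \<in> V1 \<inter> V2)"
      using P1 P2 by (simp add: compact_open_constraints_def obeys_def ball_Un)
    then show ?case by blast
  next
    case (UN \<V>)
    then obtain V' where "V' \<in> \<V>" "\<beta> \<in> V'" by blast
    then obtain P where
      "compact_open_constraints X P" "obeys P \<beta>" "\<forall>g\<in>loops X x. obeys P g \<longrightarrow> g \<in> V'"
      using UN.IH by blast
    then show ?case using \<open>V' \<in> \<V>\<close> by blast
  next
    case (Basis V)
    then obtain K U where V: "V = {g \<in> loops X x. g ` K \<subseteq> U}"
      "compactin (top_of_set {0..1::real}) K" "openin X U" by blast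
    have "compact_open_constraints X {(K, U)} \<and> obeys {(K, U)} \<beta> \<and>
          (\<forall>g\<in>loops X x. obeys {(K, U)} g \<longrightarrow> g \<in> V)"
      using V Basis.prems by (simp add: compact_open_constraints_def obeys_def)
    then show ?case by blast
  qed
  then show ?thesis using that by blast
qed

section \<open>Homotopies of loops and density in the fundamental group\<close>

lemma loops_pathin: "g \<in> loops X x \<Longrightarrow> continuous_map (top_of_set {0..1}) X g"
  by (simp add: loops_def pathin_def)

lemma loop_homotopic_refl:
  assumes "g \<in> loops X x" shows "loop_homotopic X x g g"
proof -
  have "continuous_map (top_of_set ({0..1::real} \<times> {0..1::real})) X (\<lambda>z. g (snd z))"
    by (rule continuous_map_reparam[OF _ _ loops_pathin[OF assms]]) (auto intro!: continuous_intros)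
  then show ?thesis unfolding loop_homotopic_def prod_top_of_set
    by (intro exI[of _ "\<lambda>z. g (snd z)"]) (use assms in \<open>auto simp: loops_def\<close>)
qed

lemma loop_homotopic_sym:
  assumes "loop_homotopic X x g g'" shows "loop_homotopic X x g' g"
proof -
  obtain h where h: "continuous_map (top_of_set ({0..1::real} \<times> {0..1::real})) X h"
    "\<forall>s\<in>{0..1}. h (0, s) = g s \<and> h (1, s) = g' s" "\<forall>t\<in>{0..1}. h (t, 0) = x \<and> h (t, 1) = x"
    using assms unfolding loop_homotopic_def prod_top_of_set by blast
  have "continuous_map (top_of_set ({0..1::real} \<times> {0..1::real})) X (\<lambda>z. h (1 - fst z, snd z))"
    by (rule continuous_map_reparam[OF _ _ h(1)]) (auto intro!: continuous_intros)
  then show ?thesis unfolding loop_homotopic_def prod_top_of_set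
    by (intro exI[of _ "\<lambda>z. h (1 - fst z, snd z)"]) (use h in auto)
qed

text \<open>Transitivity: run the first homotopy at double speed, then the second one.\<close>
lemma loop_homotopic_trans:
  assumes "loop_homotopic X x g g'" "loop_homotopic X x g' g''" shows "loop_homotopic X x g g''"
proof -
  let ?D = "{0..1::real} \<times> {0..1::real}"
  obtain h1 where h1: "continuous_map (top_of_set ?D) X h1"
    "\<forall>s\<in>{0..1}. h1 (0, s) = g s \<and> h1 (1, s) = g' s" "\<forall>t\<in>{0..1}. h1 (t, 0) = x \<and> h1 (t, 1) = x"
    using assms(1) unfolding loop_homotopic_def prod_top_of_set by blast
  obtain h2 where h2: "continuous_map (top_of_set ?D) X h2"
    "\<forall>s\<in>{0..1}. h2 (0, s) = g' s \<and> h2 (1, s) = g'' s" "\<forall>t\<in>{0..1}. h2 (t, 0) = x \<and> h2 (t, 1) = x"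
    using assms(2) unfolding loop_homotopic_def prod_top_of_set by blast
  define h where "h z = (if fst z \<le> 1/2 then h1 (min 1 (2 * fst z), snd z)
                         else h2 (max 0 (2 * fst z - 1), snd z))" for z
  have c1: "continuous_map (top_of_set ?D) X (\<lambda>z. h1 (min 1 (2 * fst z), snd z))"
    by (rule continuous_map_reparam[OF _ _ h1(1)]) (auto intro!: continuous_intros)
  have c2: "continuous_map (top_of_set ?D) X (\<lambda>z. h2 (max 0 (2 * fst z - 1), snd z))"
    by (rule continuous_map_reparam[OF _ _ h2(1)]) (auto intro!: continuous_intros)
  have "continuous_map (top_of_set ?D) X h"
    unfolding h_def
  proof (rule continuous_map_cases_le)
    show "continuous_map (top_of_set ?D) euclideanreal fst"
      by (simp add: continuous_on_fst continuous_on_id)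
  next
    fix z assume "z \<in> topspace (top_of_set ?D)" "fst z = 1/2"
    then show "h1 (min 1 (2 * fst z), snd z) = h2 (max 0 (2 * fst z - 1), snd z)"
      using h1(2) h2(2) by (cases z) auto
  qed (auto intro: continuous_map_from_subtopology[OF c1] continuous_map_from_subtopology[OF c2])
  then show ?thesis unfolding loop_homotopic_def prod_top_of_set
    by (intro exI[of _ h]) (use h1 h2 in \<open>auto simp: h_def\<close>)
qed

lemma loop_homotopic_compose:
  assumes "loop_homotopic X x g g'" "continuous_map X Y f"
  shows "loop_homotopic Y (f x) (f \<circ> g) (f \<circ> g')"
proof -
  obtain h where h: "continuous_map (prod_topology (top_of_set {0..1::real}) (top_of_set {0..1::real})) X h"
    "\<forall>s\<in>{0..1}. h (0, s) = g s \<and> h (1, s) = g' s" "\<forall>t\<in>{0..1}. h (t, 0) = x \<and> h (t, 1) = x"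
    using assms(1) unfolding loop_homotopic_def by blast
  show ?thesis unfolding loop_homotopic_def
    by (intro exI[of _ "f \<circ> h"] conjI continuous_map_compose[OF h(1) assms(2)]) (use h in auto)
qed

text \<open>A homotopy that is constant except at its initial instant: if every open set containing
  \<open>f t\<close> also contains \<open>g t\<close>, the map equal to \<open>f\<close> at time 0 and to \<open>g\<close> afterwards is continuous.\<close>
lemma loop_homotopic_if_specializes:
  assumes f: "continuous_map (top_of_set {0..1}) Z f" and g: "continuous_map (top_of_set {0..1}) Z g"
    and spec: "\<And>t U. t \<in> {0..1} \<Longrightarrow> openin Z U \<Longrightarrow> f t \<in> U \<Longrightarrow> g t \<in> U"
    and ends: "f 0 = y" "g 0 = y" "f 1 = y" "g 1 = y"
  shows "loop_homotopic Z y f g"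
proof -
  define I where "I = {0..1::real}"
  define H where "H z = (if fst z = 0 then f (snd z) else g (snd z))" for z :: "real \<times> real"
  have "continuous_map (top_of_set (I \<times> I)) Z H"
    unfolding continuous_map_def
  proof (intro conjI allI impI)
    show "H \<in> topspace (top_of_set (I \<times> I)) \<rightarrow> topspace Z"
      using continuous_map_funspace[OF f] continuous_map_funspace[OF g]
      unfolding H_def I_def by (auto simp: Pi_iff)
  next
    fix U assume U: "openin Z U"
    have eq: "{z \<in> topspace (top_of_set (I \<times> I)). H z \<in> U} =
          (I \<times> {t \<in> I. f t \<in> U}) \<union> ((I \<inter> - {0}) \<times> {t \<in> I. g t \<in> U})"
      using spec[OF _ U] unfolding H_def I_def by auto
    have "openin (top_of_set I) {t \<in> I. f t \<in> U}" "openin (top_of_set I) {t \<in> I. g t \<in> U}"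
      using openin_continuous_map_preimage[OF f U] openin_continuous_map_preimage[OF g U]
      unfolding I_def by simp_all
    moreover have "openin (top_of_set I) (I \<inter> - {0})"
      by (intro openin_open_Int) auto
    moreover have "openin (top_of_set I) I"
      using openin_topspace[of "top_of_set I"] by simp
    ultimately show "openin (top_of_set (I \<times> I)) {z \<in> topspace (top_of_set (I \<times> I)). H z \<in> U}"
      unfolding eq by (intro openin_Un openin_Times)
  qed
  then show ?thesis unfolding loop_homotopic_def prod_top_of_set
    by (intro exI[of _ H]) (use ends in \<open>simp add: H_def I_def\<close>)
qed

lemma loop_class_eq:
  assumes "loop_homotopic X x g1 g2"
  shows "loop_class X x g1 = loop_class X x g2"
  using assms loop_homotopic_trans loop_homotopic_sym unfolding loop_class_def by metis

lemma loop_class_self: "g \<in> loops X x \<Longrightarrow> g \<in> loop_class X x g"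
  by (simp add: loop_class_def loop_homotopic_refl)

lemma topspace_pi1_top: "topspace (pi1_top X x) = loop_class X x ` loops X x"
  unfolding pi1_top_def topspace_quotient_topology topspace_loop_space ..

lemma induced_pi1_loop_class:
  assumes "\<alpha> \<in> loops X x" "continuous_map X Y f"
  shows "induced_pi1 X x Y f (loop_class X x \<alpha>) = loop_class Y (f x) (f \<circ> \<alpha>)"
proof -
  define g where "g = (SOME g. g \<in> loop_class X x \<alpha>)"
  have "g \<in> loop_class X x \<alpha>"
    unfolding g_def using loop_class_self[OF assms(1)] by (rule someI[where P="\<lambda>g. g \<in> loop_class X x \<alpha>"])
  then have "loop_homotopic X x \<alpha> g" by (simp add: loop_class_def)
  then have "loop_homotopic Y (f x) (f \<circ> \<alpha>) (f \<circ> g)"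
    using assms(2) by (rule loop_homotopic_compose)
  then show ?thesis
    unfolding induced_pi1_def g_def[symmetric] by (rule loop_class_eq[symmetric])
qed

lemma pi1_top_dense:
  assumes approx: "\<And>\<beta> P. \<beta> \<in> loops Y y \<Longrightarrow> compact_open_constraints Y P \<Longrightarrow> obeys P \<beta> \<Longrightarrow>
      \<exists>\<beta>'. \<beta>' \<in> loops Y y \<and> obeys P \<beta>' \<and> loop_class Y y \<beta>' \<in> S"
  shows "pi1_top Y y closure_of S = topspace (pi1_top Y y)"
proof (rule subset_antisym[OF closure_of_subset_topspace subsetI])
  fix c assume c: "c \<in> topspace (pi1_top Y y)"
  then obtain \<beta> where \<beta>: "\<beta> \<in> loops Y y" "c = loop_class Y y \<beta>"
    unfolding topspace_pi1_top by blast
  have "\<exists>c'\<in>S. c' \<in> W" if W: "openin (pi1_top Y y) W" "c \<in> W" for W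
  proof -
    define V where "V = {g \<in> loops Y y. loop_class Y y g \<in> W}"
    have "openin (loop_space Y y) V"
      using W(1) unfolding V_def pi1_top_def openin_quotient_topology topspace_loop_space by blast
    moreover have "\<beta> \<in> V" unfolding V_def using \<beta> W(2) by simp
    ultimately obtain P where P: "compact_open_constraints Y P" "obeys P \<beta>"
      "\<And>g. g \<in> loops Y y \<Longrightarrow> obeys P g \<Longrightarrow> g \<in> V"
      by (metis loop_space_nbhd)
    obtain \<beta>' where "\<beta>' \<in> loops Y y" "obeys P \<beta>'" "loop_class Y y \<beta>' \<in> S"
      using approx[OF \<beta>(1) P(1,2)] by blast
    with P(3) show ?thesis unfolding V_def by blast
  qed
  then show "c \<in> pi1_top Y y closure_of S" using c unfolding in_closure_of by blast
qed

section \<open>Gaps of a closed subset of the unit interval\<close>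

definition gap :: "real set \<Rightarrow> real \<Rightarrow> real \<Rightarrow> bool" where
  "gap T c d \<longleftrightarrow> c \<in> T \<and> d \<in> T \<and> c < d \<and> {c<..<d} \<inter> T = {}"

lemma gap_around:
  assumes T: "closed T" "0 \<in> T" "1 \<in> T" and k: "k \<in> {0..1}" "k \<notin> T"
  obtains c d where "gap T c d" "c < k" "k < d"
proof -
  let ?L = "T \<inter> {0..k}" and ?R = "T \<inter> {k..1}"
  have bdd: "bdd_above ?L" "bdd_below ?R"
    by (auto intro: bdd_aboveI[of _ k] bdd_belowI[of _ k])
  have "Sup ?L \<in> ?L" using T k bdd by (intro closed_contains_Sup closed_Int) auto
  moreover have "Inf ?R \<in> ?R" using T k bdd by (intro closed_contains_Inf closed_Int) auto
  moreover have "t \<notin> T" if "Sup ?L < t" "t < Inf ?R" for t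
  proof
    assume "t \<in> T"
    moreover have "0 \<le> t" "t \<le> 1" using that \<open>Sup ?L \<in> ?L\<close> \<open>Inf ?R \<in> ?R\<close> by auto
    ultimately have "t \<in> ?L \<or> t \<in> ?R" by auto
    then show False using that cSup_upper[OF _ bdd(1)] cInf_lower[OF _ bdd(2)] by force
  qed
  ultimately have "gap T (Sup ?L) (Inf ?R)" "Sup ?L < k" "k < Inf ?R"
    using k unfolding gap_def by (auto simp: le_less)
  then show ?thesis by (rule that)
qed

text \<open>A set open in \<open>[0,1]\<close> and contained in \<open>T \<subseteq> [0,1]\<close> cannot contain an endpoint of a gap
  of \<open>T\<close>: a neighbourhood of the endpoint would reach into the gap.\<close>
lemma gap_endpoints_not_in_open:
  assumes g: "gap T c d" and T: "T \<subseteq> {0..1}"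
    and W: "openin (top_of_set {0..1}) W" "W \<subseteq> T"
  shows "c \<notin> W" "d \<notin> W"
proof -
  have cd: "0 \<le> c" "c < d" "d \<le> 1" "{c<..<d} \<inter> T = {}" using g T unfolding gap_def by auto
  have no_close: "\<not> (\<exists>e>0. \<forall>t\<in>{0..1}. dist t x < e \<longrightarrow> t \<in> W)" if "x = c \<or> x = d" for x
  proof
    assume "\<exists>e>0. \<forall>t\<in>{0..1}. dist t x < e \<longrightarrow> t \<in> W"
    then obtain e where e: "e > 0" "\<And>t. t \<in> {0..1} \<Longrightarrow> dist t x < e \<Longrightarrow> t \<in> W" by blast
    define t where "t = (if x = c then min ((c + d) / 2) (c + e / 2) else max ((c + d) / 2) (d - e / 2))"
    have "t \<in> {c<..<d}" "t \<in> {0..1}" "dist t x < e"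
      using cd(1-3) e(1) that unfolding t_def dist_real_def by (auto simp: min_def max_def)
    then show False using e(2) W(2) cd(4) by blast
  qed
  show "c \<notin> W" "d \<notin> W"
    using no_close W(1) unfolding openin_euclidean_subtopology_iff by blast+
qed

lemma gaps_disjoint:
  assumes "gap T c1 d1" "gap T c2 d2" "c1 < c2"
  shows "d1 \<le> c2"
proof (rule ccontr)
  assume "\<not> d1 \<le> c2"
  then have "c2 \<in> {c1<..<d1}" "c2 \<in> T" using assms unfolding gap_def by auto
  then show False using assms(1) unfolding gap_def by blast
qed

lemma gap_unique:
  assumes "gap T c d1" "gap T c d2"
  shows "d1 = d2"
proof -
  have "\<not> d < d'" if "gap T c d" "gap T c d'" for d d'
  proof
    assume "d < d'"
    then have "d \<in> {c<..<d'}" "d \<in> T" using that(1) unfolding gap_def by auto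
    then show False using that(2) unfolding gap_def by blast
  qed
  then show ?thesis using assms by (metis linorder_neq_iff)
qed

lemma finite_gap_cover:
  assumes T: "closed T" "T \<subseteq> {0..1}"
    and W: "openin (top_of_set {0..1}) W" "W \<subseteq> T" "0 \<in> W" "1 \<in> W"
    and K: "compact K" "K \<subseteq> {0..1} - T"
  obtains L dd where "finite L" "\<And>l. l \<in> L \<Longrightarrow> gap T l (dd l) \<and> l \<notin> W \<and> dd l \<notin> W"
    "K \<subseteq> (\<Union>l\<in>L. {l<..<dd l})"
proof -
  have "\<forall>k\<in>K. \<exists>cd. gap T (fst cd) (snd cd) \<and> k \<in> {fst cd<..<snd cd}"
  proof
    fix k assume "k \<in> K"
    then obtain c d where "gap T c d" "c < k" "k < d"
      using gap_around[OF T(1)] W K(2) by blast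
    then show "\<exists>cd. gap T (fst cd) (snd cd) \<and> k \<in> {fst cd<..<snd cd}"
      by (intro exI[of _ "(c, d)"]) simp
  qed
  then obtain \<gamma> where \<gamma>: "\<And>k. k \<in> K \<Longrightarrow> gap T (fst (\<gamma> k)) (snd (\<gamma> k)) \<and> k \<in> {fst (\<gamma> k)<..<snd (\<gamma> k)}"
    by metis
  obtain K' where K': "K' \<subseteq> K" "finite K'" "K \<subseteq> (\<Union>k\<in>K'. {fst (\<gamma> k)<..<snd (\<gamma> k)})"
    by (rule compactE_image[OF K(1), of K "\<lambda>k. {fst (\<gamma> k)<..<snd (\<gamma> k)}"]) (use \<gamma> in auto)
  define L where "L = (\<lambda>k. fst (\<gamma> k)) ` K'"
  define dd where "dd l = snd (\<gamma> (SOME k. k \<in> K' \<and> fst (\<gamma> k) = l))" for l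
  have dd: "dd (fst (\<gamma> k)) = snd (\<gamma> k)" "gap T (fst (\<gamma> k)) (snd (\<gamma> k))" if "k \<in> K'" for k
  proof -
    define k' where "k' = (SOME k'. k' \<in> K' \<and> fst (\<gamma> k') = fst (\<gamma> k))"
    have "k' \<in> K' \<and> fst (\<gamma> k') = fst (\<gamma> k)"
      unfolding k'_def by (rule someI[of _ k]) (use that in simp)
    then show "dd (fst (\<gamma> k)) = snd (\<gamma> k)"
      using gap_unique \<gamma> K'(1) that unfolding dd_def k'_def[symmetric] by (metis subsetD)
    show "gap T (fst (\<gamma> k)) (snd (\<gamma> k))" using \<gamma> K'(1) that by blast
  qed
  show ?thesis
  proof
    show "finite L" unfolding L_def using K'(2) by simp
    show "gap T l (dd l) \<and> l \<notin> W \<and> dd l \<notin> W" if l: "l \<in> L" for l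
    proof -
      obtain k where k: "k \<in> K'" "l = fst (\<gamma> k)" using l unfolding L_def by blast
      then have "gap T l (dd l)" using dd[OF k(1)] by simp
      then show ?thesis using gap_endpoints_not_in_open[OF _ T(2) W(1,2)] by blast
    qed
    show "K \<subseteq> (\<Union>l\<in>L. {l<..<dd l})"
      using K'(3) dd(1) unfolding L_def by auto
  qed
qed

section \<open>Collapsing an open set to a point\<close>

locale collapse_open_set =
  fixes X :: "'a topology" and A :: "'a set" and a :: 'a
  assumes open_A: "openin X A"
    and path_connected_closure: "path_connectedin X (X closure_of A)"
    and base: "a \<in> A"
begin

abbreviation "Y \<equiv> quotient_space X A"
abbreviation "p \<equiv> collapse A"

text \<open>The image in \<open>X/A\<close> of the closure of \<open>A\<close>; its points cannot be separated from \<open>* = A\<close>.\<close>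
abbreviation "E \<equiv> p ` (X closure_of A)"

lemma A_subset: "A \<subseteq> topspace X"
  using open_A by (rule openin_subset)

lemma A_closure: "A \<subseteq> X closure_of A"
  using A_subset by (rule closure_of_subset)

lemma p_in_A: "x \<in> A \<Longrightarrow> p x = A"
  by (simp add: collapse_def)

lemma p_eq_outside_A: "p v = p x \<Longrightarrow> x \<notin> A \<Longrightarrow> v = x"
  unfolding collapse_def by (auto split: if_splits)

lemma topspace_Y: "topspace Y = p ` topspace X"
  unfolding quotient_space_def topspace_quotient_topology ..

lemma openin_Y: "openin Y U \<longleftrightarrow> U \<subseteq> p ` topspace X \<and> openin X {x \<in> topspace X. p x \<in> U}"
  unfolding quotient_space_def openin_quotient_topology ..

lemma continuous_p: "continuous_map X Y p"
  unfolding quotient_space_def by (rule continuous_map_quotient)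

lemma p_base: "p a = A"
  using base by (rule p_in_A)

lemma A_in_Y: "A \<in> topspace Y"
proof -
  have "a \<in> topspace X" using base A_subset by blast
  then show ?thesis unfolding topspace_Y using p_base by (metis image_eqI)
qed

lemma open_base_point: "openin Y {A}"
proof -
  have "{x \<in> topspace X. p x \<in> {A}} = A"
    using A_subset by (auto simp: collapse_def)
  then show ?thesis using A_in_Y open_A unfolding openin_Y topspace_Y by simp
qed

lemma p_in_E: "x \<in> topspace X \<Longrightarrow> p x \<in> E \<longleftrightarrow> x \<in> X closure_of A"
proof
  assume "p x \<in> E"
  then obtain z where z: "z \<in> X closure_of A" "p z = p x" by auto
  show "x \<in> X closure_of A"
  proof (cases "x \<in> A")
    case True
    then show ?thesis using A_closure by blast
  next
    case False
    then show ?thesis using p_eq_outside_A[OF z(2)] z(1) by simp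
  qed
qed auto

lemma E_subset: "E \<subseteq> topspace Y"
  unfolding topspace_Y by (intro image_mono closure_of_subset_topspace)

lemma closedin_E: "closedin Y E"
proof -
  have "{x \<in> topspace X. p x \<in> topspace Y - E} = topspace X - X closure_of A"
    using p_in_E unfolding topspace_Y by auto
  then have "openin Y (topspace Y - E)"
    unfolding openin_Y topspace_Y[symmetric] by (auto intro: openin_diff)
  then show ?thesis using E_subset by (simp add: closedin_def)
qed

text \<open>Every open set meeting \<open>E\<close> contains the base point: its preimage is an open
  neighbourhood of a point in the closure of \<open>A\<close>, hence meets \<open>A\<close>.\<close>
lemma open_meeting_E: "openin Y U \<Longrightarrow> y \<in> U \<Longrightarrow> y \<in> E \<Longrightarrow> A \<in> U"
proof -
  assume U: "openin Y U" "y \<in> U" "y \<in> E"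
  then obtain z where z: "z \<in> X closure_of A" "y = p z" by auto
  have "z \<in> topspace X" by (rule subsetD[OF closure_of_subset_topspace z(1)])
  then have "z \<in> {x \<in> topspace X. p x \<in> U}" using U(2) z(2) by simp
  moreover have "openin X {x \<in> topspace X. p x \<in> U}"
    using U(1) unfolding openin_Y by (rule conjunct2)
  ultimately obtain w where "w \<in> A" "w \<in> {x \<in> topspace X. p x \<in> U}"
    using z(1) unfolding in_closure_of by meson
  then show "A \<in> U" by (simp add: p_in_A)
qed

lemma base_in_E: "A \<in> E"
  using base A_closure p_base by (metis image_eqI subsetD)

text \<open>Points of \<open>X/A\<close> other than \<open>*\<close> are singletons; \<open>the_elem\<close> lifts them back to \<open>X - A\<close>.\<close>
lemma lift:
  assumes "y \<in> topspace Y" "y \<noteq> A"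
  shows "the_elem y \<in> topspace X - A" "p (the_elem y) = y"
proof -
  obtain x where x: "x \<in> topspace X" "y = p x" using assms(1) topspace_Y by blast
  then have "x \<notin> A" using assms(2) p_in_A by blast
  then show "the_elem y \<in> topspace X - A" "p (the_elem y) = y"
    using x by (simp_all add: collapse_def)
qed

lemma lift_in_closure:
  assumes "y \<in> E" "y \<noteq> A"
  shows "the_elem y \<in> X closure_of A"
proof -
  have "y \<in> topspace Y" using assms(1) E_subset by blast
  note l = lift[OF this assms(2)]
  then show ?thesis using p_in_E[of "the_elem y"] assms(1) by auto
qed

text \<open>Off the base point, \<open>p\<close> is a homeomorphism onto its image, so maps avoiding \<open>*\<close> lift
  continuously.\<close>
lemma lift_continuous:
  assumes g: "continuous_map Z Y g" and avoid: "\<And>z. z \<in> topspace Z \<Longrightarrow> g z \<noteq> A"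
  shows "continuous_map Z X (\<lambda>z. the_elem (g z))"
proof -
  have gz: "g z \<in> topspace Y" if "z \<in> topspace Z" for z
    using continuous_map_funspace[OF g] that by blast
  have "openin Z {z \<in> topspace Z. the_elem (g z) \<in> V}" if V: "openin X V" for V
  proof -
    have pre: "{x \<in> topspace X. p x \<in> p ` (V \<union> A)} = V \<union> A"
    proof (intro set_eqI iffI)
      fix x assume "x \<in> {x \<in> topspace X. p x \<in> p ` (V \<union> A)}"
      then obtain v where "v \<in> V \<union> A" "p v = p x" by auto
      then show "x \<in> V \<union> A" using p_eq_outside_A by (cases "x \<in> A") auto
    qed (use openin_subset[OF V] A_subset in auto)
    then have U: "openin Y (p ` (V \<union> A))"
      unfolding openin_Y using openin_subset[OF V] A_subset V open_A by auto
    have "g z \<in> p ` (V \<union> A) \<longleftrightarrow> the_elem (g z) \<in> V" if "z \<in> topspace Z" for z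
    proof -
      note x = lift[OF gz[OF that] avoid[OF that]]
      have "the_elem (g z) \<in> {x \<in> topspace X. p x \<in> p ` (V \<union> A)} \<longleftrightarrow> the_elem (g z) \<in> V \<union> A"
        by (simp only: pre)
      then show ?thesis using x by auto
    qed
    then have "{z \<in> topspace Z. the_elem (g z) \<in> V} = {z \<in> topspace Z. g z \<in> p ` (V \<union> A)}"
      by auto
    then show ?thesis using openin_continuous_map_preimage[OF g U] by simp
  qed
  moreover have "(\<lambda>z. the_elem (g z)) \<in> topspace Z \<rightarrow> topspace X"
    using lift(1)[OF gz avoid] by auto
  ultimately show ?thesis unfolding continuous_map_def by blast
qed

lemma link_in_closure:
  fixes u b :: real
  assumes xy: "x \<in> X closure_of A" "y \<in> X closure_of A" and ub: "u \<le> b" and deg: "u = b \<Longrightarrow> x = y"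
  obtains \<gamma> where "continuous_map (top_of_set {u..b}) X \<gamma>" "\<gamma> u = x" "\<gamma> b = y"
    "\<gamma> ` {u..b} \<subseteq> X closure_of A"
proof (cases "u = b")
  case True
  have "x \<in> topspace X" by (rule subsetD[OF closure_of_subset_topspace xy(1)])
  then show ?thesis using that[of "\<lambda>_. x"] True deg xy(1) by auto
next
  case False
  obtain \<gamma> where \<gamma>: "pathin X \<gamma>" "\<gamma> \<in> {0..1} \<rightarrow> X closure_of A" "\<gamma> 0 = x" "\<gamma> 1 = y"
    using path_connected_closure xy unfolding path_connectedin by blast
  define \<phi> where "\<phi> t = (t - u) / (b - u)" for t :: real
  have \<phi>: "\<phi> ` {u..b} \<subseteq> {0..1}" "\<phi> u = 0" "\<phi> b = 1"
    using ub False unfolding \<phi>_def by (auto simp: divide_simps)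
  have "continuous_map (top_of_set {u..b}) X (\<lambda>t. \<gamma> (\<phi> t))"
    by (rule continuous_map_reparam[OF _ \<phi>(1)])
       (use \<gamma>(1) False in \<open>auto simp: \<phi>_def pathin_def intro!: continuous_intros\<close>)
  moreover have "(\<lambda>t. \<gamma> (\<phi> t)) ` {u..b} \<subseteq> X closure_of A" using \<phi>(1) \<gamma>(2) by auto
  ultimately show ?thesis using that \<phi>(2,3) \<gamma>(3,4) by auto
qed

section \<open>Approximating loops in the quotient by images of loops in \<open>X\<close>\<close>

text \<open>An interval on which a loop \<open>\<beta>\<close> in \<open>X/A\<close> can be lifted to \<open>X\<close>: it avoids \<open>*\<close>, and its
  endpoints lie in \<open>E\<close>, so their lifts can be joined to the closure of \<open>A\<close>.\<close>
definition liftable_interval :: "(real \<Rightarrow> 'a set) \<Rightarrow> real \<Rightarrow> real \<Rightarrow> bool" where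
  "liftable_interval \<beta> l r \<longleftrightarrow> l < r \<and> r < 1 \<and> \<beta> l \<in> E \<and> \<beta> r \<in> E \<and> (\<forall>t\<in>{l..r}. \<beta> t \<noteq> A)"

text \<open>Induction adds the leftmost interval in front of the path for the rest.\<close>
lemma lift_along_intervals:
  assumes \<beta>: "continuous_map (top_of_set {0..1}) Y \<beta>"
  shows "finite L \<Longrightarrow> \<forall>l\<in>L. liftable_interval \<beta> l (dd l) \<Longrightarrow> \<forall>l1\<in>L. \<forall>l2\<in>L. l1 < l2 \<longrightarrow> dd l1 \<le> l2
    \<Longrightarrow> 0 \<le> u \<Longrightarrow> u < 1 \<Longrightarrow> \<forall>l\<in>L. u \<le> l \<Longrightarrow> x \<in> X closure_of A \<Longrightarrow> (u \<in> L \<longrightarrow> p x = \<beta> u)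
    \<Longrightarrow> \<exists>\<alpha>. continuous_map (top_of_set {u..1}) X \<alpha> \<and> \<alpha> u = x \<and> \<alpha> 1 = a \<and>
          (\<forall>t\<in>{u..1}. if t \<in> (\<Union>l\<in>L. {l..dd l}) then p (\<alpha> t) = \<beta> t else \<alpha> t \<in> X closure_of A)"
proof (induction L arbitrary: u x rule: finite_linorder_min_induct)
  case empty
  have "a \<in> X closure_of A" using base A_closure by blast
  moreover have "u \<le> 1" "u = 1 \<Longrightarrow> x = a" using empty.prems(4) by auto
  ultimately obtain \<gamma> where \<gamma>: "continuous_map (top_of_set {u..1}) X \<gamma>" "\<gamma> u = x" "\<gamma> 1 = a"
    "\<gamma> ` {u..1} \<subseteq> X closure_of A"
    using link_in_closure[OF empty.prems(6)] by blast
  show ?case by (rule exI[of _ \<gamma>]) (use \<gamma> in auto)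
next
  case (insert b L)
  have u: "0 \<le> u" "u \<le> b" and x: "x \<in> X closure_of A"
    using insert.prems by auto
  have bd: "b < dd b" "dd b < 1" "\<beta> b \<in> E" "\<beta> (dd b) \<in> E" "\<And>t. t \<in> {b..dd b} \<Longrightarrow> \<beta> t \<noteq> A"
    using insert.prems(1) unfolding liftable_interval_def by auto
  have after: "\<And>l. l \<in> L \<Longrightarrow> dd b \<le> l" using insert.prems(2) insert.hyps(2) by auto
  have \<beta>_top: "\<And>t. t \<in> {0..1} \<Longrightarrow> \<beta> t \<in> topspace Y"
    using continuous_map_funspace[OF \<beta>] by auto
  have ends: "b \<in> {b..dd b}" "dd b \<in> {b..dd b}" and sub01: "{b..dd b} \<subseteq> {0..1}"
    using bd(1,2) u by auto
  define xb xd where "xb = the_elem (\<beta> b)" and "xd = the_elem (\<beta> (dd b))"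
  have xb: "p xb = \<beta> b" "xb \<in> X closure_of A"
    unfolding xb_def using lift(2)[OF \<beta>_top[OF subsetD[OF sub01 ends(1)]] bd(5)[OF ends(1)]]
      lift_in_closure[OF bd(3) bd(5)[OF ends(1)]] by auto
  have xd: "p xd = \<beta> (dd b)" "xd \<in> X closure_of A"
    unfolding xd_def using lift(2)[OF \<beta>_top[OF subsetD[OF sub01 ends(2)]] bd(5)[OF ends(2)]]
      lift_in_closure[OF bd(4) bd(5)[OF ends(2)]] by auto
  have "\<exists>\<alpha>'. continuous_map (top_of_set {dd b..1}) X \<alpha>' \<and> \<alpha>' (dd b) = xd \<and> \<alpha>' 1 = a \<and>
     (\<forall>t\<in>{dd b..1}. if t \<in> (\<Union>l\<in>L. {l..dd l}) then p (\<alpha>' t) = \<beta> t else \<alpha>' t \<in> X closure_of A)"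
    by (rule insert.IH) (use insert.prems(1,2) after bd(1,2) u xd in auto)
  then obtain \<alpha>' where \<alpha>': "continuous_map (top_of_set {dd b..1}) X \<alpha>'" "\<alpha>' (dd b) = xd" "\<alpha>' 1 = a"
    "\<forall>t\<in>{dd b..1}. if t \<in> (\<Union>l\<in>L. {l..dd l}) then p (\<alpha>' t) = \<beta> t else \<alpha>' t \<in> X closure_of A"
    by blast
  have "x = xb" if "u = b"
  proof -
    have "p x = \<beta> b" using insert.prems(7) that by simp
    then have "x \<notin> A" using bd(5)[of b] bd(1) p_in_A by auto
    then show ?thesis using p_eq_outside_A \<open>p x = \<beta> b\<close> xb(1) by metis
  qed
  then obtain \<gamma> where \<gamma>: "continuous_map (top_of_set {u..b}) X \<gamma>" "\<gamma> u = x" "\<gamma> b = xb"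
    "\<gamma> ` {u..b} \<subseteq> X closure_of A"
    using link_in_closure[OF x xb(2) u(2)] by blast
  have lifted: "continuous_map (top_of_set {b..dd b}) X (\<lambda>t. the_elem (\<beta> t))"
  proof (rule lift_continuous)
    show "continuous_map (top_of_set {b..dd b}) Y \<beta>"
      by (rule continuous_map_reparam[where \<phi>="\<lambda>t. t", OF continuous_on_id _ \<beta>]) (use sub01 in auto)
  qed (use bd(5) in auto)
  define \<alpha> where "\<alpha> t = (if t \<le> b then \<gamma> t else if t \<le> dd b then the_elem (\<beta> t) else \<alpha>' t)" for t
  have inner: "continuous_map (top_of_set {b..1}) X (\<lambda>t. if t \<le> dd b then the_elem (\<beta> t) else \<alpha>' t)"
    by (rule continuous_map_join_intervals[OF _ _ lifted \<alpha>'(1)]) (use bd \<alpha>'(2) xd_def in auto)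
  have "continuous_map (top_of_set {u..1}) X \<alpha>"
    unfolding \<alpha>_def
    by (rule continuous_map_join_intervals[OF u(2) _ \<gamma>(1) inner]) (use bd \<gamma>(3) xb_def in auto)
  moreover have "\<alpha> u = x" "\<alpha> 1 = a" using u \<gamma>(2) bd \<alpha>'(3) by (auto simp: \<alpha>_def)
  moreover have "if t \<in> (\<Union>l\<in>insert b L. {l..dd l}) then p (\<alpha> t) = \<beta> t else \<alpha> t \<in> X closure_of A"
    if t: "t \<in> {u..1}" for t
  proof -
    consider (on_link) "t \<le> b" | (on_interval) "b < t" "t \<le> dd b" | (on_rest) "dd b < t" by linarith
    then show ?thesis
    proof cases
      case on_link
      then have "t \<in> (\<Union>l\<in>insert b L. {l..dd l}) \<longleftrightarrow> t = b"
        using insert.hyps(2) bd(1) by force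
      moreover have "\<gamma> t \<in> X closure_of A" using \<gamma>(4) t on_link by auto
      ultimately show ?thesis using on_link \<gamma>(3) xb(1) by (auto simp: \<alpha>_def)
    next
      case on_interval
      then show ?thesis using lift(2)[OF \<beta>_top bd(5)] u bd(2) by (auto simp: \<alpha>_def)
    next
      case on_rest
      then have "t \<in> (\<Union>l\<in>insert b L. {l..dd l}) \<longleftrightarrow> t \<in> (\<Union>l\<in>L. {l..dd l})" by auto
      then show ?thesis using on_rest t \<alpha>'(4) bd(1) by (auto simp: \<alpha>_def)
    qed
  qed
  ultimately show ?case by blast
qed

lemma liftable_cover:
  assumes \<beta>: "continuous_map (top_of_set {0..1}) Y \<beta>" "\<beta> 0 = A" "\<beta> 1 = A"
    and K: "compact K" "K \<subseteq> {0..1}" "\<And>t. t \<in> K \<Longrightarrow> \<beta> t \<notin> E"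
  obtains L dd where "finite L" "\<And>l. l \<in> L \<Longrightarrow> 0 \<le> l \<and> liftable_interval \<beta> l (dd l)"
    "\<forall>l1\<in>L. \<forall>l2\<in>L. l1 < l2 \<longrightarrow> dd l1 \<le> l2" "K \<subseteq> (\<Union>l\<in>L. {l<..<dd l})"
proof -
  define T where "T = {t \<in> {0..1}. \<beta> t \<in> E}"
  define W where "W = {t \<in> {0..1}. \<beta> t \<in> {A}}"
  have "closedin (top_of_set {0..1}) T"
    using closedin_continuous_map_preimage[OF \<beta>(1) closedin_E] unfolding T_def by simp
  then have T: "closed T" "T \<subseteq> {0..1}"
    using closedin_closed_trans unfolding T_def by auto
  have W: "openin (top_of_set {0..1}) W" "W \<subseteq> T" "0 \<in> W" "1 \<in> W"
    using openin_continuous_map_preimage[OF \<beta>(1) open_base_point] base_in_E \<beta>(2,3)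
    unfolding W_def T_def by auto
  have "K \<subseteq> {0..1} - T" using K unfolding T_def by auto
  then obtain L dd where L: "finite L" "\<And>l. l \<in> L \<Longrightarrow> gap T l (dd l) \<and> l \<notin> W \<and> dd l \<notin> W"
    "K \<subseteq> (\<Union>l\<in>L. {l<..<dd l})"
    using finite_gap_cover[OF T W K(1)] by blast
  show ?thesis
  proof (rule that[OF L(1) _ _ L(3)])
    fix l assume "l \<in> L"
    then have g: "l \<in> T" "dd l \<in> T" "l < dd l" "{l<..<dd l} \<inter> T = {}" "l \<notin> W" "dd l \<notin> W"
      using L(2) unfolding gap_def by auto
    have "dd l \<noteq> 1" using g(6) W(4) by auto
    then have bounds: "0 \<le> l" "dd l < 1" using g(1,2) T(2) by force+
    have avoid: "\<beta> t \<noteq> A" if "t \<in> {l..dd l}" for t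
    proof (cases "t = l \<or> t = dd l")
      case True
      then show ?thesis using g(1,2,5,6) T(2) unfolding W_def by auto
    next
      case False
      then have "t \<in> {l<..<dd l}" using that by auto
      then have "t \<notin> T" using g(4) by blast
      moreover have "t \<in> {0..1}" using that g(1,2) T(2) by force
      ultimately have "\<beta> t \<notin> E" unfolding T_def by blast
      then show ?thesis using base_in_E by metis
    qed
    show "0 \<le> l \<and> liftable_interval \<beta> l (dd l)"
      using g bounds avoid unfolding liftable_interval_def T_def by auto
  next
    show "\<forall>l1\<in>L. \<forall>l2\<in>L. l1 < l2 \<longrightarrow> dd l1 \<le> l2"
      using gaps_disjoint L(2) by blast
  qed
qed

text \<open>Replacing a loop by \<open>*\<close> outside a closed set \<open>C\<close> keeps it continuous, provided it lies in \<open>E\<close>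
  on the boundary part \<open>C - C'\<close> (\<open>C'\<close> open): near such points every open set contains \<open>*\<close>.\<close>
lemma truncate_at_base:
  assumes \<beta>: "continuous_map (top_of_set {0..1}) Y \<beta>"
    and C: "closed C" "open C'" "C' \<subseteq> C" and edge: "\<And>t. t \<in> {0..1} \<Longrightarrow> t \<in> C - C' \<Longrightarrow> \<beta> t \<in> E"
  shows "continuous_map (top_of_set {0..1}) Y (\<lambda>t. if t \<in> C then \<beta> t else A)"
  unfolding continuous_map_def
proof (intro conjI allI impI)
  show "(\<lambda>t. if t \<in> C then \<beta> t else A) \<in> topspace (top_of_set {0..1}) \<rightarrow> topspace Y"
    using continuous_map_funspace[OF \<beta>] A_in_Y by auto
next
  fix U assume U: "openin Y U"
  let ?pre = "{t \<in> topspace (top_of_set {0..1}). (if t \<in> C then \<beta> t else A) \<in> U}"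
  have pre: "openin (top_of_set {0..1}) {t \<in> {0..1}. \<beta> t \<in> U}"
    using openin_continuous_map_preimage[OF \<beta> U] by simp
  show "openin (top_of_set {0..1}) ?pre"
  proof (cases "A \<in> U")
    case True
    then have "?pre = ({0..1} \<inter> - C) \<union> {t \<in> {0..1}. \<beta> t \<in> U}" by auto
    moreover have "openin (top_of_set {0..1}) ({0..1} \<inter> - C)"
      using C(1) by (intro openin_open_Int) auto
    ultimately show ?thesis using pre by (metis openin_Un)
  next
    case False
    have "?pre = {t \<in> {0..1}. \<beta> t \<in> U} \<inter> ({0..1} \<inter> C')"
    proof (intro set_eqI iffI)
      fix t assume t: "t \<in> ?pre"
      then have "t \<in> C" "\<beta> t \<in> U" "t \<in> {0..1}" using False by (auto split: if_splits)
      moreover have "t \<in> C'"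
        using edge open_meeting_E[OF U] False calculation by blast
      ultimately show "t \<in> {t \<in> {0..1}. \<beta> t \<in> U} \<inter> ({0..1} \<inter> C')" by auto
    qed (use C(3) in auto)
    moreover have "openin (top_of_set {0..1}) ({0..1} \<inter> C')"
      using C(2) by (intro openin_open_Int)
    ultimately show ?thesis using pre by (metis openin_Int)
  qed
qed

text \<open>Keep \<open>\<beta>\<close> on finitely many
  liftable intervals covering the times where it must stay away from \<open>*\<close>, collapse it to \<open>*\<close>
  elsewhere, and lift it to \<open>X\<close>; the two loops agree up to specialisation.\<close>
lemma approximate_loop:
  assumes \<beta>: "\<beta> \<in> loops Y A" and P: "compact_open_constraints Y P" "obeys P \<beta>"
  shows "\<exists>\<alpha> \<beta>'. \<alpha> \<in> loops X a \<and> \<beta>' \<in> loops Y A \<and> obeys P \<beta>' \<and> loop_homotopic Y A (p \<circ> \<alpha>) \<beta>'"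
proof -
  have \<beta>c: "continuous_map (top_of_set {0..1}) Y \<beta>" and \<beta>01: "\<beta> 0 = A" "\<beta> 1 = A"
    using \<beta> by (simp_all add: loops_def pathin_def)
  define K where "K = \<Union>(fst ` {z \<in> P. A \<notin> snd z})"
  have "compact (fst z) \<and> fst z \<subseteq> {0..1}" if "z \<in> P" for z
    using P(1) that unfolding compact_open_constraints_def by (simp add: compactin_subtopology)
  then have Kc: "compact K" "K \<subseteq> {0..1}"
    using P(1) unfolding K_def compact_open_constraints_def by (auto intro!: compact_Union)
  have Kout: "\<beta> t \<notin> E" if "t \<in> K" for t
  proof
    assume "\<beta> t \<in> E"
    obtain z where "z \<in> P" "A \<notin> snd z" "t \<in> fst z" using \<open>t \<in> K\<close> unfolding K_def by auto
    moreover have "\<beta> t \<in> snd z" "openin Y (snd z)"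
      using P calculation unfolding compact_open_constraints_def obeys_def by auto
    ultimately show False using open_meeting_E \<open>\<beta> t \<in> E\<close> by blast
  qed
  obtain L dd where L: "finite L" "\<And>l. l \<in> L \<Longrightarrow> 0 \<le> l \<and> liftable_interval \<beta> l (dd l)"
    "\<forall>l1\<in>L. \<forall>l2\<in>L. l1 < l2 \<longrightarrow> dd l1 \<le> l2" "K \<subseteq> (\<Union>l\<in>L. {l<..<dd l})"
    using liftable_cover[OF \<beta>c \<beta>01 Kc Kout] by metis
  define C C' where "C = (\<Union>l\<in>L. {l..dd l})" and "C' = (\<Union>l\<in>L. {l<..<dd l})"
  have inner_subset: "C' \<subseteq> C" unfolding C_def C'_def by auto
  have "a \<in> X closure_of A" using base A_closure by blast
  then obtain \<alpha> where \<alpha>: "continuous_map (top_of_set {0..1}) X \<alpha>" "\<alpha> 0 = a" "\<alpha> 1 = a"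
    "\<forall>t\<in>{0..1}. if t \<in> C then p (\<alpha> t) = \<beta> t else \<alpha> t \<in> X closure_of A"
    using lift_along_intervals[OF \<beta>c L(1), of dd 0 a] L(2,3) \<beta>01 p_base unfolding C_def by auto
  define \<beta>' where "\<beta>' t = (if t \<in> C then \<beta> t else A)" for t
  have "continuous_map (top_of_set {0..1}) Y \<beta>'"
    unfolding \<beta>'_def
  proof (rule truncate_at_base[where C=C and C'=C', OF \<beta>c])
    show "closed C" "open C'"
      unfolding C_def C'_def using L(1) by auto
    show "C' \<subseteq> C" by (rule inner_subset)
    show "\<beta> t \<in> E" if "t \<in> {0..1}" and t: "t \<in> C - C'" for t
    proof -
      obtain l where l: "l \<in> L" "t \<in> {l..dd l}" "t \<notin> {l<..<dd l}"
        using t unfolding C_def C'_def by blast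
      then have "t = l \<or> t = dd l" by auto
      then show ?thesis using L(2)[OF l(1)] unfolding liftable_interval_def by auto
    qed
  qed
  moreover have "\<beta>' 0 = A" "\<beta>' 1 = A" using \<beta>01 by (auto simp: \<beta>'_def)
  ultimately have \<beta>': "\<beta>' \<in> loops Y A" by (simp add: loops_def pathin_def)
  have "obeys P \<beta>'"
    unfolding obeys_def
  proof (intro ballI subsetI)
    fix z y assume z: "z \<in> P" and "y \<in> \<beta>' ` fst z"
    then obtain t where t: "t \<in> fst z" "y = \<beta>' t" by blast
    have \<beta>t: "\<beta> t \<in> snd z" using P(2) z t(1) unfolding obeys_def by blast
    show "y \<in> snd z"
    proof (cases "A \<in> snd z")
      case True
      then show ?thesis using \<beta>t t(2) by (simp add: \<beta>'_def)
    next
      case False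
      then have "t \<in> K" using z t(1) unfolding K_def by blast
      then have "t \<in> C" using L(4) inner_subset unfolding C'_def by blast
      then show ?thesis using \<beta>t t(2) by (simp add: \<beta>'_def)
    qed
  qed
  moreover have "loop_homotopic Y A (p \<circ> \<alpha>) \<beta>'"
  proof (rule loop_homotopic_if_specializes)
    show "continuous_map (top_of_set {0..1}) Y (p \<circ> \<alpha>)"
      using \<alpha>(1) continuous_p by (rule continuous_map_compose)
    show "continuous_map (top_of_set {0..1}) Y \<beta>'" using \<beta>' by (simp add: loops_def pathin_def)
    show "\<beta>' t \<in> U" if t: "t \<in> {0..1}" "openin Y U" "(p \<circ> \<alpha>) t \<in> U" for t U
    proof -
      have "if t \<in> C then p (\<alpha> t) = \<beta> t else \<alpha> t \<in> X closure_of A" using \<alpha>(4) t(1) by blast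
      then show ?thesis using open_meeting_E[OF t(2)] t(3) by (auto simp: \<beta>'_def split: if_splits)
    qed
  qed (use \<alpha>(2,3) \<beta>' p_base in \<open>auto simp: loops_def\<close>)
  moreover have "\<alpha> \<in> loops X a" using \<alpha> by (simp add: loops_def pathin_def)
  ultimately show ?thesis using \<beta>' by blast
qed

end

theorem theorem3p2:
  fixes X :: "'a topology" and A :: "'a set" and a :: 'a
  assumes "openin X A"
    and "path_connectedin X (X closure_of A)"
    and "a \<in> A"
  shows "(pi1_top (quotient_space X A) (collapse A a)) closure_of
           (induced_pi1 X a (quotient_space X A) (collapse A) ` topspace (pi1_top X a))
         = topspace (pi1_top (quotient_space X A) (collapse A a))"
proof -
  interpret collapse_open_set X A a by unfold_locales (rule assms)+
  let ?S = "induced_pi1 X a Y p ` topspace (pi1_top X a)"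
  have "\<exists>\<beta>'. \<beta>' \<in> loops Y A \<and> obeys P \<beta>' \<and> loop_class Y A \<beta>' \<in> ?S"
    if approx: "\<beta> \<in> loops Y A" "compact_open_constraints Y P" "obeys P \<beta>" for \<beta> P
  proof -
    obtain \<alpha> \<beta>' where \<alpha>\<beta>': "\<alpha> \<in> loops X a" "\<beta>' \<in> loops Y A" "obeys P \<beta>'"
      "loop_homotopic Y A (p \<circ> \<alpha>) \<beta>'"
      using approximate_loop[OF approx] by blast
    have "loop_class Y A \<beta>' = induced_pi1 X a Y p (loop_class X a \<alpha>)"
      using induced_pi1_loop_class[OF \<alpha>\<beta>'(1) continuous_p] loop_class_eq[OF \<alpha>\<beta>'(4)] p_base
      by simp
    moreover have "loop_class X a \<alpha> \<in> topspace (pi1_top X a)"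
      unfolding topspace_pi1_top using \<alpha>\<beta>'(1) by blast
    ultimately show ?thesis using \<alpha>\<beta>'(2,3) by blast
  qed
  then show ?thesis unfolding p_base by (rule pi1_top_dense)
qed

end
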